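(* Let $2\le n<m$. Suppose $\lambda$ is a characteristic matrix (resp. real characteristic matrix) on $C^{n+1}(m+1)^*$ of the block form $$\lambda=\begin{pmatrix}1 & a_2\ \cdots\ a_{m+1}\\ \mathbf{0} & A\end{pmatrix},$$ where $\mathbf{0}$ is the zero column of length $n$ and $A$ is an $n\times m$ matrix. Then $A$ is a characteristic matrix (resp. real characteristic matrix) on $C^n(m)^*$.
   Context: For $2\le n<m$, $C^n(m)^*$ is the dual of the cyclic polytope $C^n(m)$, a simple $n$-polytope with facets $F_1,\ldots,F_m$ labeled so that $F_{i_1},\ldots,F_{i_n}$ meet at a vertex iff $\{i_1,\ldots,i_n\}$ is a disjoint union of sets of the form $I_j=\{j,j+1\}\cap\{1,\ldots,m\}$, $j\in\{0,\ldots,m\}$ (dual Gale evenness condition); the same labeling convention is used for $C^{n+1}(m+1)^*$. A characteristic matrix on a simple $n$-polytope with facets $F_1,\ldots,F_m$ is an integer $n\times m$ matrix whose columns $\boldsymbol\lambda_{i_1},\ldots,\boldsymbol\lambda_{i_n}$ have determinant $\pm1$ whenever $F_{i_1},\ldots,F_{i_n}$ meet at a vertex; a real characteristic matrix is the analogue over $\mathbb{Z}/2$ with determinant $1$. *)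

theory Defs
  imports "HOL-Library.Z2" "Jordan_Normal_Form.Determinant" "Jordan_Normal_Form.DL_Submatrix"
begin

definition gale_block :: "nat \<Rightarrow> nat \<Rightarrow> nat set" where
  "gale_block m j = {j, j + 1} \<inter> {1..m}"

text \<open>Dual Gale evenness: the facets labelled by S meet at a vertex of the dual
  cyclic polytope C^n(m)^* iff S is an n-element set which is a disjoint union of
  sets I_j, j \<in> {0..m}.\<close>
definition dual_cyclic_vertex :: "nat \<Rightarrow> nat \<Rightarrow> nat set \<Rightarrow> bool" where
  "dual_cyclic_vertex n m S \<longleftrightarrow>
     S \<subseteq> {1..m} \<and> card S = n \<and>
     (\<exists>J \<subseteq> {0..m}. disjoint_family_on (gale_block m) J \<and> \<Union>(gale_block m ` J) = S)"

text \<open>Generic characteristic-matrix condition over a commutative ring: an n x m matrix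
  (column k-1 corresponds to facet F_k) such that for every vertex, the n x n
  submatrix of the corresponding columns has determinant \<plusminus>1.\<close>
definition char_matrix_over :: "nat \<Rightarrow> nat \<Rightarrow> 'a :: comm_ring_1 mat \<Rightarrow> bool" where
  "char_matrix_over n m L \<longleftrightarrow>
     L \<in> carrier_mat n m \<and>
     (\<forall>S. dual_cyclic_vertex n m S \<longrightarrow>
        det (submatrix L UNIV ((\<lambda>k. k - 1) ` S)) \<in> {1, -1})"

definition characteristic_matrix :: "nat \<Rightarrow> nat \<Rightarrow> int mat \<Rightarrow> bool" where
  "characteristic_matrix n m L \<longleftrightarrow> char_matrix_over n m L"

text \<open>Real characteristic matrix: matrix over Z/2 (type bit), determinants 1
  (in Z/2, -1 = 1, so this is the same condition).\<close>
definition real_characteristic_matrix :: "nat \<Rightarrow> nat \<Rightarrow> bit mat \<Rightarrow> bool" where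
  "real_characteristic_matrix n m L \<longleftrightarrow>
     L \<in> carrier_mat n m \<and>
     (\<forall>S. dual_cyclic_vertex n m S \<longrightarrow>
        det (submatrix L UNIV ((\<lambda>k. k - 1) ` S)) = 1)"

definition block_form :: "nat \<Rightarrow> nat \<Rightarrow> 'a :: {zero,one} mat \<Rightarrow> 'a mat \<Rightarrow> bool" where
  "block_form n m L A \<longleftrightarrow>
     L \<in> carrier_mat (n + 1) (m + 1) \<and> A \<in> carrier_mat n m \<and>
     L $$ (0, 0) = 1 \<and> (\<forall>i<n. L $$ (i + 1, 0) = 0) \<and>
     (\<forall>i<n. \<forall>j<m. L $$ (i + 1, j + 1) = A $$ (i, j))"

end

theory Submission
  imports Defs
begin

text \<open>A vertex \<open>S\<close> of \<open>C\<^sup>n(m)\<^sup>*\<close> lifts to the vertex \<open>{1} \<union> (S + 1)\<close> of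
  \<open>C\<^sup>n\<^sup>+\<^sup>1(m+1)\<^sup>*\<close>: if \<open>S\<close> is the disjoint union of the blocks \<open>I\<^sub>j\<close>, \<open>j \<in> J\<close>, then
  the blocks \<open>I\<^sub>j\<^sub>+\<^sub>1\<close> cover \<open>S + 1\<close>, together with \<open>1\<close> when \<open>0 \<in> J\<close>; otherwise one adds
  the block \<open>I\<^sub>0 = {1}\<close>. The minor of \<open>L\<close> on the lifted vertex has first column
  \<open>(1, 0, \<dots>, 0)\<close>, and Laplace expansion along it leaves exactly the minor of \<open>A\<close> on
  \<open>S\<close>.\<close>

lemma pick_insert_0_Suc_image_Suc:
  assumes "j < card T"
  shows "pick (insert 0 (Suc ` T)) (Suc j) = Suc (pick T j)"
  using assms
proof (induction j)
  case 0
  then have "T \<noteq> {}" by auto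
  have "(LEAST a. a \<in> insert 0 (Suc ` T) \<and> 0 < a) = Suc (LEAST t. t \<in> T)"
  proof (rule Least_equality)
    show "Suc (LEAST t. t \<in> T) \<in> insert 0 (Suc ` T) \<and> 0 < Suc (LEAST t. t \<in> T)"
      using \<open>T \<noteq> {}\<close> by (auto intro: LeastI)
  qed (auto simp: Least_le)
  then show ?case by simp
next
  case (Suc j)
  have "pick T (Suc j) \<in> T \<and> pick T j < pick T (Suc j)"
    using pick_in_set_le[OF Suc.prems] pick_mono_le[OF Suc.prems, of j] by simp
  then have "(LEAST a. a \<in> insert 0 (Suc ` T) \<and> Suc (pick T j) < a)
      = Suc (LEAST a. a \<in> T \<and> pick T j < a)"
    by (intro Least_equality) (auto intro: LeastI simp: Least_le)
  then show ?case using Suc by simp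
qed

lemma det_first_column_zero_below:
  fixes B :: "'a::comm_ring_1 mat"
  assumes B: "B \<in> carrier_mat (Suc k) (Suc k)"
    and zero: "\<And>i. 0 < i \<Longrightarrow> i \<le> k \<Longrightarrow> B $$ (i, 0) = 0"
  shows "det B = B $$ (0, 0) * det (mat_delete B 0 0)"
proof -
  have "det B = (\<Sum>i<Suc k. B $$ (i, 0) * cofactor B i 0)"
    using laplace_expansion_column[OF B] by simp
  also have "\<dots> = B $$ (0, 0) * cofactor B 0 0"
    using zero by (subst sum.remove[of _ 0]) (auto intro!: sum.neutral)
  finally show ?thesis by (simp add: cofactor_def)
qed

lemma submatrix_index_UNIV:
  assumes "i < dim_row (submatrix A UNIV J)" and "j < dim_col (submatrix A UNIV J)"
  shows "submatrix A UNIV J $$ (i, j) = A $$ (i, pick J j)"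
  using submatrix_index[of i A UNIV j J] assms by (simp add: dim_submatrix pick_UNIV)

lemma det_submatrix_block_form:
  fixes L :: "'a::comm_ring_1 mat"
  assumes bf: "block_form n m L A" and T: "T \<subseteq> {0..<m}" "card T = n"
  shows "det (submatrix L UNIV (insert 0 (Suc ` T))) = det (submatrix A UNIV T)"
proof -
  let ?T' = "insert 0 (Suc ` T)"
  define B where "B = submatrix L UNIV ?T'"
  have L: "L \<in> carrier_mat (Suc n) (Suc m)" and A: "A \<in> carrier_mat n m"
    using bf by (auto simp: block_form_def)
  have "finite T" using T finite_subset by blast
  have "{j. j < dim_col L \<and> j \<in> ?T'} = ?T'" "{j. j < dim_col A \<and> j \<in> T} = T"
    using T L A by auto
  then have "dim_col B = card ?T'" "dim_col (submatrix A UNIV T) = card T"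
    unfolding B_def dim_submatrix by simp_all
  moreover have "card ?T' = Suc n"
    using T \<open>finite T\<close> by (simp add: card_image)
  moreover have "dim_row B = Suc n" "dim_row (submatrix A UNIV T) = n"
    using L A unfolding B_def dim_submatrix by simp_all
  ultimately have B: "B \<in> carrier_mat (Suc n) (Suc n)"
    and AT: "submatrix A UNIV T \<in> carrier_mat n n"
    using T unfolding carrier_mat_def by simp_all
  have "mat_delete B 0 0 = submatrix A UNIV T"
  proof (rule eq_matI)
    fix i j assume "i < dim_row (submatrix A UNIV T)" "j < dim_col (submatrix A UNIV T)"
    then have ij: "i < n" "j < n" using AT by auto
    have "pick T j \<in> T" using pick_in_set_le[of j T] T ij by simp
    have "mat_delete B 0 0 $$ (i, j) = B $$ (Suc i, Suc j)"
      using mat_delete_index[OF B, of 0 0 i j] ij by simp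
    also have "\<dots> = L $$ (Suc i, pick ?T' (Suc j))"
      using ij B unfolding B_def by (intro submatrix_index_UNIV) auto
    also have "\<dots> = L $$ (Suc i, Suc (pick T j))"
      using ij T by (simp add: pick_insert_0_Suc_image_Suc del: pick.simps)
    also have "\<dots> = A $$ (i, pick T j)"
      using bf ij \<open>pick T j \<in> T\<close> T by (auto simp: block_form_def)
    also have "\<dots> = submatrix A UNIV T $$ (i, j)"
      using ij AT by (simp add: submatrix_index_UNIV)
    finally show "mat_delete B 0 0 $$ (i, j) = submatrix A UNIV T $$ (i, j)" .
  qed (use B AT in auto)
  moreover have "B $$ (i, 0) = (if i = 0 then 1 else 0)" if "i \<le> n" for i
    using that bf B by (cases i) (auto simp: B_def submatrix_index_UNIV block_form_def)
  ultimately show ?thesis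
    using det_first_column_zero_below[OF B] by (simp add: B_def)
qed

lemma gale_block_subset: "gale_block m j \<subseteq> {1..m}"
  by (auto simp: gale_block_def)

lemma gale_block_Suc_0: "gale_block (Suc m) 0 = {1}"
  by (auto simp: gale_block_def)

lemma gale_block_Suc_Suc:
  "gale_block (Suc m) (Suc j) = Suc ` gale_block m j \<union> (if j = 0 then {1} else {})"
  by (auto simp: gale_block_def image_iff)

lemma Int_gale_block_Suc_Suc:
  assumes "a \<noteq> b"
  shows "gale_block (Suc m) (Suc a) \<inter> gale_block (Suc m) (Suc b) =
    Suc ` (gale_block m a \<inter> gale_block m b)"
  using assms gale_block_subset[of m a] gale_block_subset[of m b]
  by (auto simp: gale_block_Suc_Suc image_iff)

lemma disjoint_family_on_gale_block_Suc_image: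
  assumes "disjoint_family_on (gale_block m) J"
  shows "disjoint_family_on (gale_block (Suc m)) (Suc ` J)"
  using assms by (auto simp: disjoint_family_on_def Int_gale_block_Suc_Suc)

lemma Union_gale_block_Suc_image:
  "\<Union>(gale_block (Suc m) ` Suc ` J) = Suc ` \<Union>(gale_block m ` J) \<union> (if 0 \<in> J then {1} else {})"
  by (auto simp: gale_block_Suc_Suc split: if_splits)

lemma dual_cyclic_vertex_shift:
  assumes "dual_cyclic_vertex n m S"
  shows "dual_cyclic_vertex (n + 1) (m + 1) (insert 1 (Suc ` S))"
proof -
  obtain J where S: "S \<subseteq> {1..m}" "card S = n" and J: "J \<subseteq> {0..m}"
    and disj: "disjoint_family_on (gale_block m) J" and union: "\<Union>(gale_block m ` J) = S"
    using assms unfolding dual_cyclic_vertex_def by blast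
  define J' where "J' = (if 0 \<in> J then Suc ` J else insert 0 (Suc ` J))"
  have "J' \<subseteq> {0..Suc m}"
    using J by (auto simp: J'_def)
  moreover have "disjoint_family_on (gale_block (Suc m)) J'"
  proof (cases "0 \<in> J")
    case False
    then have "1 \<notin> \<Union>(gale_block (Suc m) ` Suc ` J)"
      by (auto simp: gale_block_def)
    then show ?thesis
      using False disjoint_family_on_gale_block_Suc_image[OF disj]
      by (auto simp: J'_def disjoint_family_on_insert gale_block_Suc_0)
  qed (simp add: J'_def disjoint_family_on_gale_block_Suc_image[OF disj])
  moreover have "\<Union>(gale_block (Suc m) ` J') = insert 1 (Suc ` S)"
  proof -
    have "\<Union>(gale_block (Suc m) ` Suc ` J) = Suc ` S \<union> (if 0 \<in> J then {1} else {})"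
      unfolding Union_gale_block_Suc_image union ..
    then show ?thesis
      by (auto simp: J'_def gale_block_Suc_0)
  qed
  moreover have "card (insert 1 (Suc ` S)) = Suc n"
    using S finite_subset[OF S(1)]
    by (subst card_insert_disjoint) (auto simp: card_image)
  ultimately show ?thesis
    using S(1) unfolding dual_cyclic_vertex_def by auto
qed

lemma dual_cyclic_vertex_column_indices:
  assumes "dual_cyclic_vertex n m S"
  shows "(\<lambda>k. k - 1) ` S \<subseteq> {0..<m}" and "card ((\<lambda>k. k - 1) ` S) = n"
    and "(\<lambda>k. k - 1) ` insert 1 (Suc ` S) = insert 0 (Suc ` ((\<lambda>k. k - 1) ` S))"
proof -
  have S: "S \<subseteq> {1..m}" "card S = n"
    using assms by (auto simp: dual_cyclic_vertex_def)
  then show "(\<lambda>k. k - 1) ` S \<subseteq> {0..<m}"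
    by force
  have "inj_on (\<lambda>k. k - 1) S"
    using S(1) by (intro inj_on_diff_nat) auto
  then show "card ((\<lambda>k. k - 1) ` S) = n"
    using S(2) by (simp add: card_image)
  have "Suc ` ((\<lambda>k. k - 1) ` S) = S"
    using S(1) by (force simp: image_iff)
  then show "(\<lambda>k. k - 1) ` insert 1 (Suc ` S) = insert 0 (Suc ` ((\<lambda>k. k - 1) ` S))"
    by (auto simp: image_iff)
qed

lemma det_submatrix_block_form_vertex:
  fixes L :: "'a::comm_ring_1 mat"
  assumes "block_form n m L A" and "dual_cyclic_vertex n m S"
  shows "det (submatrix A UNIV ((\<lambda>k. k - 1) ` S)) =
    det (submatrix L UNIV ((\<lambda>k. k - 1) ` insert 1 (Suc ` S)))"
  unfolding dual_cyclic_vertex_column_indices(3)[OF assms(2)]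
  by (rule det_submatrix_block_form[OF assms(1) dual_cyclic_vertex_column_indices(1,2)[OF assms(2)],
        symmetric])

theorem lemma6p1:
  fixes n m :: nat
  assumes "2 \<le> n" and "n < m"
  shows "(\<forall>(L :: int mat) A. block_form n m L A \<and> characteristic_matrix (n + 1) (m + 1) L
            \<longrightarrow> characteristic_matrix n m A) \<and>
         (\<forall>(L :: bit mat) A. block_form n m L A \<and> real_characteristic_matrix (n + 1) (m + 1) L
            \<longrightarrow> real_characteristic_matrix n m A)"
proof (intro conjI allI impI; elim conjE)
  fix L A :: "int mat"
  assume bf: "block_form n m L A" and L: "characteristic_matrix (n + 1) (m + 1) L"
  have "det (submatrix A UNIV ((\<lambda>k. k - 1) ` S)) \<in> {1, -1}" if "dual_cyclic_vertex n m S" for S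
    using L dual_cyclic_vertex_shift[OF that]
    unfolding det_submatrix_block_form_vertex[OF bf that] characteristic_matrix_def char_matrix_over_def
    by blast
  then show "characteristic_matrix n m A"
    using bf by (simp add: characteristic_matrix_def char_matrix_over_def block_form_def)
next
  fix L A :: "bit mat"
  assume bf: "block_form n m L A" and L: "real_characteristic_matrix (n + 1) (m + 1) L"
  have "det (submatrix A UNIV ((\<lambda>k. k - 1) ` S)) = 1" if "dual_cyclic_vertex n m S" for S
    using L dual_cyclic_vertex_shift[OF that]
    unfolding det_submatrix_block_form_vertex[OF bf that] real_characteristic_matrix_def
    by blast
  then show "real_characteristic_matrix n m A"
    using bf by (simp add: real_characteristic_matrix_def block_form_def)
qed

end
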